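(* For any hypothesis class $\mathcal{H}$ and integer $k\ge0$, \[ \mathrm{ELdim}(\mathcal{H},k)\le\sup\Big\{t:\binom{t}{\le k+1}\le\mathcal{S}(\mathcal{H},t)\Big\}. \]
   Context: Hypotheses are maps $\mathcal{X}\to\{-1,+1\}$; $\binom{t}{\le j}=\sum_{i=0}^{j}\binom{t}{i}$. A depth-$t$ $\mathcal{X}$-valued tree $\mathbf{x}$ is a sequence of maps $\mathbf{x}_s:\{\pm1\}^{s-1}\to\mathcal{X}$, $s=1,\dots,t$; write $\mathbf{x}_s(\epsilon)=\mathbf{x}_s(\epsilon_1,\dots,\epsilon_{s-1})$. Let $S(\mathcal{H},\mathbf{x})=\{\epsilon\in\{\pm1\}^t:\exists h\in\mathcal{H},\ \epsilon_s=h(\mathbf{x}_s(\epsilon))\ \forall s\}$, and the tree shattering coefficient $\mathcal{S}(\mathcal{H},t)=\max_{\mathbf{x}}|S(\mathcal{H},\mathbf{x})|$ over depth-$t$ trees for $t\ge1$; $\mathcal{S}(\mathcal{H},0)=1$ if $\mathcal{H}\neq\emptyset$ and $0$ otherwise. Extended mistake tree w.r.t. $\mathcal{H}$: a finite full binary tree (possibly a single leaf) in which each internal node $v$ is labeled by $x_v\in\mathcal{X}$ and has two solid downward edges, to its left child (label $-1$) and right child (label $+1$), plus one dashed downward edge to one of its two children; each leaf is labeled by some $h\in\mathcal{H}$ with $h(x_v)$ equal to the direction label at every internal node $v$ on the root-to-leaf path. A root-to-leaf path chooses at each internal node one downward edge; its length is its number of edges. The tree is $(k,m)$-difficult if every root-to-leaf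 path using at most $k$ solid edges has length at least $m$. $\mathrm{ELdim}(\mathcal{H},k)$ is the supremum of $m$ such that a $(k,m)$-difficult extended mistake tree w.r.t. $\mathcal{H}$ exists. *)

theory Defs
  imports Main "HOL-Library.Extended_Nat"
begin

text \<open>Hypotheses are maps into {-1,+1}, represented as functions to int.
  binom_le t j = sum_{i=0}^{j} (t choose i).\<close>

definition binom_le :: "nat \<Rightarrow> nat \<Rightarrow> nat" where
  "binom_le t j = (\<Sum>i\<le>j. t choose i)"

text \<open>A depth-t X-valued tree: xt s gives x_s as a function of the prefix
  (eps_1,...,eps_{s-1}), given as an int list of length s-1.\<close>

definition tree_paths :: "('x \<Rightarrow> int) set \<Rightarrow> (nat \<Rightarrow> int list \<Rightarrow> 'x) \<Rightarrow> nat \<Rightarrow> int list set" where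
  "tree_paths H xt t = {eps. length eps = t \<and> set eps \<subseteq> {-1, 1} \<and>
      (\<exists>h\<in>H. \<forall>s\<in>{1..t}. eps ! (s - 1) = h (xt s (take (s - 1) eps)))}"

definition shatter_coeff :: "('x \<Rightarrow> int) set \<Rightarrow> nat \<Rightarrow> nat" where
  "shatter_coeff H t =
     (if t = 0 then (if H \<noteq> {} then 1 else 0)
      else Max {card (tree_paths H xt t) | xt. True})"

text \<open>Extended mistake trees: Node x d l r has instance x, left child l (label -1),
  right child r (label +1), and a dashed edge to the child with label d.\<close>

datatype ('x, 'h) emtree = ELeaf 'h | ENode 'x int "('x, 'h) emtree" "('x, 'h) emtree"

text \<open>Well-formedness w.r.t. H, given the constraints (x_v, label) along the path so far.\<close>

fun emt_ok :: "('x \<times> int) list \<Rightarrow> ('x \<Rightarrow> int) set \<Rightarrow> ('x, 'x \<Rightarrow> int) emtree \<Rightarrow> bool" where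
  "emt_ok cs H (ELeaf h) = (h \<in> H \<and> (\<forall>(x, y) \<in> set cs. h x = y))"
| "emt_ok cs H (ENode x d l r) =
     (d \<in> {-1, 1} \<and> emt_ok ((x, -1) # cs) H l \<and> emt_ok ((x, 1) # cs) H r)"

definition ext_mistake_tree :: "('x \<Rightarrow> int) set \<Rightarrow> ('x, 'x \<Rightarrow> int) emtree \<Rightarrow> bool" where
  "ext_mistake_tree H T = emt_ok [] H T"

text \<open>Root-to-leaf paths, recorded as (number of solid edges, length).\<close>

fun emt_paths :: "('x, 'h) emtree \<Rightarrow> (nat \<times> nat) set" where
  "emt_paths (ELeaf h) = {(0, 0)}"
| "emt_paths (ENode x d l r) =
     {(s + 1, n + 1) | s n. (s, n) \<in> emt_paths l} \<union>
     {(s + 1, n + 1) | s n. (s, n) \<in> emt_paths r} \<union>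
     {(s, n + 1) | s n. (s, n) \<in> emt_paths (if d = 1 then r else l)}"

definition difficult :: "nat \<Rightarrow> nat \<Rightarrow> ('x, 'h) emtree \<Rightarrow> bool" where
  "difficult k m T = (\<forall>(s, n) \<in> emt_paths T. s \<le> k \<longrightarrow> m \<le> n)"

definition ELdim :: "('x \<Rightarrow> int) set \<Rightarrow> nat \<Rightarrow> enat" where
  "ELdim H k = Sup {enat m | m. \<exists>T. ext_mistake_tree H T \<and> difficult k m T}"

end

theory Submission
  imports Defs
begin

text \<open>From a \<open>(k, m)\<close>-difficult extended mistake tree one builds, by induction on the tree, an
  ordinary depth-\<open>m\<close> tree realising at least \<open>binom_le m (k + 1)\<close> sign sequences, so \<open>m\<close> lies in the
  set whose supremum bounds the dimension. At an internal node the child reached by the dashed edge is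
  \<open>(k, m - 1)\<close>-difficult and the other child \<open>(k - 1, m - 1)\<close>-difficult; placing the node's instance
  at the root above the two trees obtained inductively adds their counts, and Pascal's rule
  \<open>binom_le (m + 1) (j + 1) = binom_le m (j + 1) + binom_le m j\<close> closes the induction.\<close>

lemma binom_le_0_right [simp]: "binom_le t 0 = 1"
  by (simp add: binom_le_def)

lemma binom_le_0_left [simp]: "binom_le 0 j = 1"
  by (induction j) (auto simp: binom_le_def)

lemma binom_le_Suc_Suc: "binom_le (Suc t) (Suc j) = binom_le t (Suc j) + binom_le t j"
proof -
  have shift: "(\<Sum>i\<le>Suc j. f i) = f 0 + (\<Sum>i\<le>j. f (Suc i))" for f :: "nat \<Rightarrow> nat"
    by (rule sum.atMost_Suc_shift)
  show ?thesis
    unfolding binom_le_def shift[of "\<lambda>i. Suc t choose i"] shift[of "\<lambda>i. t choose i"]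
    by (simp add: sum.distrib)
qed

lemma tree_paths_subset_sign_lists: "tree_paths G xt m \<subseteq> {xs. set xs \<subseteq> {-1, 1} \<and> length xs = m}"
  by (auto simp: tree_paths_def)

lemma finite_tree_paths: "finite (tree_paths G xt m)"
  using finite_lists_length_eq[of "{-1, 1 :: int}" m] tree_paths_subset_sign_lists
  by (rule finite_subset[rotated]) simp

lemma card_tree_paths_le: "card (tree_paths G xt m) \<le> 2 ^ m"
proof -
  have "card (tree_paths G xt m) \<le> card {xs. set xs \<subseteq> {-1 :: int, 1} \<and> length xs = m}"
    by (intro card_mono tree_paths_subset_sign_lists) (simp add: finite_lists_length_eq)
  then show ?thesis by (simp add: card_lists_length_eq numeral_2_eq_2)
qed

lemma card_tree_paths_le_shatter_coeff:
  assumes "G \<noteq> {}"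
  shows "card (tree_paths G xt t) \<le> shatter_coeff G t"
proof (cases "t = 0")
  case True
  have "tree_paths G xt 0 \<subseteq> {[]}" by (auto simp: tree_paths_def)
  then have "card (tree_paths G xt 0) \<le> card {[] :: int list}" by (intro card_mono) simp_all
  then show ?thesis using True assms by (simp add: shatter_coeff_def)
next
  case False
  have "finite {card (tree_paths G xt t) | xt. True}"
    by (rule finite_subset[of _ "{..2 ^ t}"]) (auto intro: card_tree_paths_le)
  then have "card (tree_paths G xt t) \<le> Max {card (tree_paths G xt t) | xt. True}"
    by (rule Max_ge) blast
  then show ?thesis using False by (simp add: shatter_coeff_def)
qed

lemma ex_card_tree_paths_ge_1:
  assumes "G \<noteq> {}" and "\<forall>h\<in>G. \<forall>x. h x \<in> {-1, 1}"
  shows "\<exists>xt. 1 \<le> card (tree_paths G xt m)"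
proof -
  obtain h where h: "h \<in> G" using assms(1) by blast
  then have "h undefined \<in> {-1, 1}" using assms(2) by blast
  with h have "replicate m (h undefined) \<in> tree_paths G (\<lambda>_ _. undefined) m"
    by (auto simp: tree_paths_def intro!: bexI[of _ h])
  then have "tree_paths G (\<lambda>_ _. undefined) m \<noteq> {}" by blast
  then show ?thesis using finite_tree_paths by (metis One_nat_def Suc_leI card_gt_0_iff)
qed

definition tree_join ::
    "'x \<Rightarrow> (nat \<Rightarrow> int list \<Rightarrow> 'x) \<Rightarrow> (nat \<Rightarrow> int list \<Rightarrow> 'x) \<Rightarrow> nat \<Rightarrow> int list \<Rightarrow> 'x" where
  "tree_join x xtl xtr s p =
     (if s = 1 then x else if hd p = 1 then xtr (s - 1) (tl p) else xtl (s - 1) (tl p))"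

lemma Cons_in_tree_paths_join:
  assumes "e \<in> {-1, 1}" and "eps \<in> tree_paths {h \<in> G. h x = e} (if e = 1 then xtr else xtl) m"
  shows "e # eps \<in> tree_paths G (tree_join x xtl xtr) (Suc m)"
proof -
  obtain h where h: "h \<in> G" "h x = e" and len: "length eps = m" and signs: "set eps \<subseteq> {-1, 1}"
    and realised: "\<forall>s\<in>{1..m}. eps ! (s - 1) = h ((if e = 1 then xtr else xtl) s (take (s - 1) eps))"
    using assms(2) by (auto simp: tree_paths_def)
  have "(e # eps) ! (s - 1) = h (tree_join x xtl xtr s (take (s - 1) (e # eps)))"
    if "s \<in> {1..Suc m}" for s
  proof (cases "s = 1")
    case True
    then show ?thesis using h by (simp add: tree_join_def)
  next
    case False
    with that obtain s' where s': "s = Suc s'" "s' \<in> {1..m}" by (cases s) force+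
    then obtain s'' where "s' = Suc s''" by (cases s') auto
    moreover have "eps ! (s' - 1) = h ((if e = 1 then xtr else xtl) s' (take (s' - 1) eps))"
      using realised s'(2) by blast
    ultimately show ?thesis using s'(1) by (simp add: tree_join_def)
  qed
  then show ?thesis using assms(1) h len signs by (auto simp: tree_paths_def)
qed

lemma card_tree_paths_join:
  "card (tree_paths {h \<in> G. h x = -1} xtl m) + card (tree_paths {h \<in> G. h x = 1} xtr m)
     \<le> card (tree_paths G (tree_join x xtl xtr) (Suc m))"
proof -
  let ?L = "(#) (-1) ` tree_paths {h \<in> G. h x = -1} xtl m"
  let ?R = "(#) 1 ` tree_paths {h \<in> G. h x = 1} xtr m"
  have "?L \<union> ?R \<subseteq> tree_paths G (tree_join x xtl xtr) (Suc m)"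
    using Cons_in_tree_paths_join[of "-1"] Cons_in_tree_paths_join[of 1] by fastforce
  then have "card (?L \<union> ?R) \<le> card (tree_paths G (tree_join x xtl xtr) (Suc m))"
    by (intro card_mono finite_tree_paths)
  moreover have "card (?L \<union> ?R) = card (tree_paths {h \<in> G. h x = -1} xtl m)
      + card (tree_paths {h \<in> G. h x = 1} xtr m)"
    by (subst card_Un_disjoint) (auto simp: finite_tree_paths card_image)
  ultimately show ?thesis by simp
qed

definition version_space :: "('x \<Rightarrow> int) set \<Rightarrow> ('x \<times> int) list \<Rightarrow> ('x \<Rightarrow> int) set" where
  "version_space H cs = {h \<in> H. \<forall>(x, y) \<in> set cs. h x = y}"

lemma version_space_Nil [simp]: "version_space H [] = H"
  by (simp add: version_space_def)

lemma version_space_Cons: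
  "version_space H ((x, y) # cs) = {h \<in> version_space H cs. h x = y}"
  by (auto simp: version_space_def)

lemma emt_ok_version_space_nonempty: "emt_ok cs H T \<Longrightarrow> version_space H cs \<noteq> {}"
  by (induction T arbitrary: cs) (fastforce simp: version_space_def)+

text \<open>The bound on solid edges is strict so that \<open>j = 0\<close> constrains nothing: this is what the child
  across a solid edge inherits once the budget \<open>k\<close> is used up.\<close>

definition difficult_lt :: "nat \<Rightarrow> nat \<Rightarrow> ('x, 'h) emtree \<Rightarrow> bool" where
  "difficult_lt j m T \<longleftrightarrow> (\<forall>s n. (s, n) \<in> emt_paths T \<longrightarrow> s < j \<longrightarrow> m \<le> n)"

lemma difficult_iff_difficult_lt: "difficult k m T \<longleftrightarrow> difficult_lt (Suc k) m T"
  by (auto simp: difficult_def difficult_lt_def)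

lemma emt_paths_ENodeI:
  "(s, n) \<in> emt_paths l \<Longrightarrow> (Suc s, Suc n) \<in> emt_paths (ENode x d l r)"
  "(s, n) \<in> emt_paths r \<Longrightarrow> (Suc s, Suc n) \<in> emt_paths (ENode x d l r)"
  "(s, n) \<in> emt_paths (if d = 1 then r else l) \<Longrightarrow> (s, Suc n) \<in> emt_paths (ENode x d l r)"
  by auto

text \<open>The dashed edge spends no solid-edge budget, so the child it points to inherits the full bound.\<close>

lemma difficult_lt_ENode_children:
  assumes "difficult_lt (Suc j) (Suc m) (ENode x d l r)"
  shows "difficult_lt (if d = 1 then j else Suc j) m l"
    and "difficult_lt (if d = 1 then Suc j else j) m r"
proof -
  have bound: "Suc m \<le> n" if "(s, n) \<in> emt_paths (ENode x d l r)" "s < Suc j" for s n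
    using assms that unfolding difficult_lt_def by blast
  show "difficult_lt (if d = 1 then j else Suc j) m l"
    using bound[OF emt_paths_ENodeI(1)] bound[OF emt_paths_ENodeI(3)]
    unfolding difficult_lt_def by (cases "d = 1") auto
  show "difficult_lt (if d = 1 then Suc j else j) m r"
    using bound[OF emt_paths_ENodeI(2)] bound[OF emt_paths_ENodeI(3)]
    unfolding difficult_lt_def by (cases "d = 1") auto
qed

lemma emt_ok_difficult_lt_imp_card_tree_paths:
  assumes signs: "\<forall>h\<in>H. \<forall>x. h x \<in> {-1, 1}"
    and "emt_ok cs H T" and "difficult_lt j m T"
  shows "\<exists>xt. binom_le m j \<le> card (tree_paths (version_space H cs) xt m)"
proof -
  have base: "\<exists>xt. binom_le m j \<le> card (tree_paths (version_space H cs) xt m)"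
    if small: "j = 0 \<or> m = 0" and nonempty: "version_space H cs \<noteq> {}" for cs m j
  proof -
    have "\<forall>h\<in>version_space H cs. \<forall>x. h x \<in> {-1, 1}" using signs by (simp add: version_space_def)
    then obtain xt where "1 \<le> card (tree_paths (version_space H cs) xt m)"
      using ex_card_tree_paths_ge_1 nonempty by blast
    moreover have "binom_le m j = 1" using small by auto
    ultimately show ?thesis by auto
  qed
  show ?thesis
    using assms(2,3)
  proof (induction T arbitrary: cs m j)
    case (ELeaf h)
    then have "j = 0 \<or> m = 0" by (auto simp: difficult_lt_def)
    then show ?case using base emt_ok_version_space_nonempty[OF ELeaf.prems(1)] by blast
  next
    case (ENode x d l r)
    show ?case
    proof (cases "j = 0 \<or> m = 0")
      case True
      then show ?thesis using base emt_ok_version_space_nonempty[OF ENode.prems(1)] by blast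
    next
      case False
      then obtain j' m' where jm: "j = Suc j'" "m = Suc m'" by (cases j; cases m) auto
      define jl where "jl = (if d = 1 then j' else j)"
      define jr where "jr = (if d = 1 then j else j')"
      obtain xtl where "binom_le m' jl \<le> card (tree_paths {g \<in> version_space H cs. g x = -1} xtl m')"
        using ENode.IH(1)[of "(x, -1) # cs" jl m'] ENode.prems
          difficult_lt_ENode_children(1)[of j' m' x d l r]
        by (auto simp: jm jl_def version_space_Cons)
      moreover obtain xtr where "binom_le m' jr \<le> card (tree_paths {g \<in> version_space H cs. g x = 1} xtr m')"
        using ENode.IH(2)[of "(x, 1) # cs" jr m'] ENode.prems
          difficult_lt_ENode_children(2)[of j' m' x d l r]
        by (auto simp: jm jr_def version_space_Cons)
      moreover have "binom_le m j = binom_le m' jl + binom_le m' jr"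
        using binom_le_Suc_Suc[of m' j'] jm by (simp add: jl_def jr_def)
      ultimately have "binom_le m j \<le> card (tree_paths (version_space H cs) (tree_join x xtl xtr) (Suc m'))"
        using card_tree_paths_join[of "version_space H cs" x xtl m' xtr] by linarith
      then show ?thesis using jm(2) by blast
    qed
  qed
qed

theorem mainTheorem7:
  fixes H :: "('x \<Rightarrow> int) set" and k :: nat
  assumes "\<forall>h\<in>H. \<forall>x. h x \<in> {-1, 1}"
  shows "ELdim H k \<le> Sup {enat t | t. binom_le t (k + 1) \<le> shatter_coeff H t}"
  unfolding ELdim_def
proof (rule Sup_least)
  fix y assume "y \<in> {enat m | m. \<exists>T. ext_mistake_tree H T \<and> difficult k m T}"
  then obtain m T where y: "y = enat m" and T: "emt_ok [] H T" and "difficult_lt (Suc k) m T"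
    by (auto simp: ext_mistake_tree_def difficult_iff_difficult_lt)
  then obtain xt where "binom_le m (k + 1) \<le> card (tree_paths H xt m)"
    using emt_ok_difficult_lt_imp_card_tree_paths[OF assms T] by auto
  also have "\<dots> \<le> shatter_coeff H m"
    using card_tree_paths_le_shatter_coeff emt_ok_version_space_nonempty[OF T] by simp
  finally show "y \<le> Sup {enat t | t. binom_le t (k + 1) \<le> shatter_coeff H t}"
    using y by (intro Sup_upper) auto
qed

end
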